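(* Let $K$ be a field and $P$ an arbitrary poset. An idempotent $\alpha\in FI(P)$ is primitive if and only if there exist $x\in P$ and an invertible $\beta\in FI(P)$ with $\alpha=\beta^{-1}\delta_x^P\beta$. In particular, the diagonal primitive idempotents of $FI(P)$ are exactly the elements $\delta_x^P$, $x\in P$.
   Context: $K$ is a field, $P$ an arbitrary poset. $I(P)$ is the set of functions $\alpha$ assigning to each pair $x\le y$ in $P$ a value $\alpha(x,y)\in K$. An element $\alpha\in I(P)$ is a finitary series if for all $x<y$ in $P$ there are only finitely many pairs $(u,v)$ with $x\le u<v\le y$ and $\alpha(u,v)\neq0$; $FI(P)$ is the set of finitary series. $FI(P)$ is an associative $K$-algebra under pointwise addition and convolution $(\alpha\beta)(x,y)=\sum_{x\le z\le y}\alpha(x,z)\beta(z,y)$. An element is diagonal if $\alpha(x,y)=0$ for $x\ne y$. For $x\in P$, $\delta_x^P\in FI(P)$ is defined by $\delta_x^P(u,v)=1$ if $u=v=x$ and $0$ otherwise. A nonzero idempotent $\alpha$ is primitive if whenever $\varepsilon$ is an idempotent with $\alpha\varepsilon=\varepsilon\alpha=\alpha$ … the paper's definition: whenever $\varepsilon$ is an idempotent with $\varepsilon\alpha=\alpha\varepsilon=\varepsilon$, then $\varepsilon=0$ or $\varepsilon=\alpha$. *)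

theory Defs
  imports Main
begin

text \<open>Incidence-space elements over a poset 'a with values in a field 'k are
represented as functions 'a => 'a => 'k which vanish outside {(x,y). x <= y}.\<close>

type_synonym ('a, 'k) inc = "'a \<Rightarrow> 'a \<Rightarrow> 'k"

definition finitary :: "('a::order, 'k::field) inc \<Rightarrow> bool" where
  "finitary \<alpha> \<longleftrightarrow>
     (\<forall>x y. x < y \<longrightarrow> finite {(u, v). x \<le> u \<and> u < v \<and> v \<le> y \<and> \<alpha> u v \<noteq> 0})"

definition FI :: "('a::order, 'k::field) inc set" where
  "FI = {\<alpha>. (\<forall>x y. \<not> x \<le> y \<longrightarrow> \<alpha> x y = 0) \<and> finitary \<alpha>}"

text \<open>Convolution; for finitary series only finitely many summands are nonzero,
so summing over the nonzero summands is the usual convolution sum.\<close>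
definition conv :: "('a::order, 'k::field) inc \<Rightarrow> ('a, 'k) inc \<Rightarrow> ('a, 'k) inc" where
  "conv \<alpha> \<beta> x y = (if x \<le> y then
      (\<Sum>z \<in> {z. x \<le> z \<and> z \<le> y \<and> \<alpha> x z * \<beta> z y \<noteq> 0}. \<alpha> x z * \<beta> z y) else 0)"

definition one_inc :: "('a::order, 'k::field) inc" where
  "one_inc x y = (if x = y then 1 else 0)"

definition zero_inc :: "('a::order, 'k::field) inc" where
  "zero_inc x y = 0"

definition delta :: "'a::order \<Rightarrow> ('a, 'k::field) inc" where
  "delta a u v = (if u = a \<and> v = a then 1 else 0)"

definition diagonal :: "('a::order, 'k::field) inc \<Rightarrow> bool" where
  "diagonal \<alpha> \<longleftrightarrow> (\<forall>x y. x \<noteq> y \<longrightarrow> \<alpha> x y = 0)"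

definition idempotent :: "('a::order, 'k::field) inc \<Rightarrow> bool" where
  "idempotent \<alpha> \<longleftrightarrow> \<alpha> \<in> FI \<and> conv \<alpha> \<alpha> = \<alpha>"

definition invertible_FI :: "('a::order, 'k::field) inc \<Rightarrow> bool" where
  "invertible_FI \<beta> \<longleftrightarrow> \<beta> \<in> FI \<and>
     (\<exists>\<gamma>\<in>FI. conv \<beta> \<gamma> = one_inc \<and> conv \<gamma> \<beta> = one_inc)"

definition inv_FI :: "('a::order, 'k::field) inc \<Rightarrow> ('a, 'k) inc" where
  "inv_FI \<beta> = (THE \<gamma>. \<gamma> \<in> FI \<and> conv \<beta> \<gamma> = one_inc \<and> conv \<gamma> \<beta> = one_inc)"

definition primitive :: "('a::order, 'k::field) inc \<Rightarrow> bool" where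
  "primitive \<alpha> \<longleftrightarrow> idempotent \<alpha> \<and> \<alpha> \<noteq> zero_inc \<and>
     (\<forall>\<epsilon>. idempotent \<epsilon> \<and> conv \<epsilon> \<alpha> = \<epsilon> \<and> conv \<alpha> \<epsilon> = \<epsilon> \<longrightarrow>
        \<epsilon> = zero_inc \<or> \<epsilon> = \<alpha>)"

end

theory Submission
  imports Defs
begin

(* FI(P) is made into a ring (type ('a,'k) fi, a copy of FI with
   convolution as multiplication), so that purely ring-theoretic arguments apply.
   (1) Primitivity of an idempotent is invariant under conjugation by units, in any ring.
   (2) A series whose diagonal is constantly 1 is a unit: writing it as 1 - nu with nu
       zero on the diagonal, nu^n vanishes on [x,y] once n exceeds the (finite) number of
       nonzero off-diagonal entries of nu in [x,y], so the geometric series of nu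
       converges locally and gives the inverse.
   (3) For idempotents a and e the element b = e a + (1-e)(1-a) satisfies b a = e b; for
       e the diagonal part of a (again idempotent) b has unit diagonal, so by (2) every
       idempotent is conjugate to its diagonal part.
   (4) A diagonal idempotent is primitive iff it is some delta x.
   The theorem follows: a primitive a is conjugate to its diagonal part, which is then
   primitive, hence a delta; conversely conjugates of deltas are primitive by (1). *)

definition jumps :: "('a::order, 'k::field) inc \<Rightarrow> 'a \<Rightarrow> 'a \<Rightarrow> ('a \<times> 'a) set" where
  "jumps \<alpha> x y = {(u, v). x \<le> u \<and> u < v \<and> v \<le> y \<and> \<alpha> u v \<noteq> 0}"

definition support_pts :: "('a::order, 'k::field) inc \<Rightarrow> 'a \<Rightarrow> 'a \<Rightarrow> 'a set" where
  "support_pts \<alpha> x y = {x, y} \<union> fst ` jumps \<alpha> x y \<union> snd ` jumps \<alpha> x y"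

lemma FI_0: "\<alpha> \<in> FI \<Longrightarrow> \<not> x \<le> y \<Longrightarrow> \<alpha> x y = 0"
  by (simp add: FI_def)

lemma finite_jumps:
  assumes "\<alpha> \<in> FI"
  shows "finite (jumps \<alpha> x y)"
proof (cases "x < y")
  case True
  thus ?thesis using assms by (simp add: FI_def finitary_def jumps_def)
next
  case False
  hence "jumps \<alpha> x y = {}" unfolding jumps_def by (auto dest: le_less_trans less_le_trans)
  thus ?thesis by simp
qed

lemma FI_I:
  "(\<And>x y. \<not> x \<le> y \<Longrightarrow> \<alpha> x y = 0) \<Longrightarrow> (\<And>x y. finite (jumps \<alpha> x y)) \<Longrightarrow> \<alpha> \<in> FI"
  by (auto simp: FI_def finitary_def jumps_def)

lemma jumps_mono: "x \<le> u \<Longrightarrow> v \<le> y \<Longrightarrow> jumps \<alpha> u v \<subseteq> jumps \<alpha> x y"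
  by (auto simp: jumps_def intro: order_trans)

lemma finite_support_pts: "\<alpha> \<in> FI \<Longrightarrow> finite (support_pts \<alpha> x y)"
  by (simp add: support_pts_def finite_jumps)

lemma support_pts_between: "z \<in> support_pts \<alpha> x y \<Longrightarrow> x \<le> y \<Longrightarrow> x \<le> z \<and> z \<le> y"
  by (auto simp: support_pts_def jumps_def dest: less_imp_le intro: order_trans)

lemma support_pts_left:
  assumes "\<alpha> \<in> FI" "\<alpha> x z \<noteq> 0" "z \<le> y"
  shows "z \<in> support_pts \<alpha> x y"
proof (cases "z = x")
  case False
  have "x \<le> z" using assms FI_0 by blast
  hence "(x, z) \<in> jumps \<alpha> x y" using False assms by (auto simp: jumps_def)
  thus ?thesis unfolding support_pts_def by (metis UnI2 snd_conv image_eqI)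
qed (simp add: support_pts_def)

lemma support_pts_right:
  assumes "\<alpha> \<in> FI" "\<alpha> z y \<noteq> 0" "x \<le> z"
  shows "z \<in> support_pts \<alpha> x y"
proof (cases "z = y")
  case False
  have "z \<le> y" using assms FI_0 by blast
  hence "(z, y) \<in> jumps \<alpha> x y" using False assms by (auto simp: jumps_def)
  thus ?thesis unfolding support_pts_def by (metis UnI1 UnI2 fst_conv image_eqI)
qed (simp add: support_pts_def)

lemma conv_0: "\<not> x \<le> y \<Longrightarrow> conv \<alpha> \<beta> x y = 0"
  by (simp add: conv_def)

lemma conv_sum:
  assumes "\<alpha> \<in> FI" "\<beta> \<in> FI" "finite F" "x \<le> y"
    and "\<And>z. x \<le> z \<Longrightarrow> z \<le> y \<Longrightarrow> \<alpha> x z * \<beta> z y \<noteq> 0 \<Longrightarrow> z \<in> F"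
  shows "conv \<alpha> \<beta> x y = (\<Sum>z\<in>F. \<alpha> x z * \<beta> z y)"
proof -
  let ?S = "{z. x \<le> z \<and> z \<le> y \<and> \<alpha> x z * \<beta> z y \<noteq> 0}"
  have "(\<Sum>z\<in>?S. \<alpha> x z * \<beta> z y) = (\<Sum>z\<in>F. \<alpha> x z * \<beta> z y)"
  proof (rule sum.mono_neutral_left[OF assms(3)])
    show "?S \<subseteq> F" using assms(5) by blast
    show "\<forall>z\<in>F - ?S. \<alpha> x z * \<beta> z y = 0"
      using FI_0[OF assms(1), of x] FI_0[OF assms(2), of _ y] by auto
  qed
  thus ?thesis using assms(4) by (simp add: conv_def)
qed

lemma conv_nonzero:
  assumes "conv \<alpha> \<beta> x y \<noteq> 0"
  obtains z where "x \<le> z" "z \<le> y" "\<alpha> x z * \<beta> z y \<noteq> 0"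
  using assms by (auto simp: conv_def split: if_splits elim: sum.not_neutral_contains_not_neutral)

lemma conv_local_right:
  assumes "\<And>z. x \<le> z \<Longrightarrow> z \<le> y \<Longrightarrow> \<beta> z y = \<beta>' z y"
  shows "conv \<alpha> \<beta> x y = conv \<alpha> \<beta>' x y"
  using assms unfolding conv_def by (auto intro!: sum.cong)

lemma conv_local_left:
  assumes "\<And>z. x \<le> z \<Longrightarrow> z \<le> y \<Longrightarrow> \<alpha> x z = \<alpha>' x z"
  shows "conv \<alpha> \<beta> x y = conv \<alpha>' \<beta> x y"
  using assms unfolding conv_def by (auto intro!: sum.cong)

lemma conv_same:
  assumes "\<alpha> \<in> FI" "\<beta> \<in> FI"
  shows "conv \<alpha> \<beta> x x = \<alpha> x x * \<beta> x x"
proof -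
  have "conv \<alpha> \<beta> x x = (\<Sum>z\<in>{x}. \<alpha> x z * \<beta> z x)"
    by (rule conv_sum[OF assms]) (auto intro: order.antisym)
  thus ?thesis by simp
qed

text \<open>FI(P) is closed under convolution: a jump of the product inside [x,y] is a jump of a
  factor or joins a jump-source of the first to a jump-target of the second.\<close>

lemma conv_FI:
  assumes "\<alpha> \<in> FI" "\<beta> \<in> FI"
  shows "conv \<alpha> \<beta> \<in> FI"
proof (rule FI_I)
  show "conv \<alpha> \<beta> x y = 0" if "\<not> x \<le> y" for x y using that by (rule conv_0)
  fix x y
  have "jumps (conv \<alpha> \<beta>) x y
          \<subseteq> jumps \<beta> x y \<union> jumps \<alpha> x y \<union> fst ` jumps \<alpha> x y \<times> snd ` jumps \<beta> x y"
  proof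
    fix p assume p: "p \<in> jumps (conv \<alpha> \<beta>) x y"
    then obtain u v where uv: "p = (u, v)" "x \<le> u" "u < v" "v \<le> y" "conv \<alpha> \<beta> u v \<noteq> 0"
      by (auto simp: jumps_def)
    then obtain z where z: "u \<le> z" "z \<le> v" "\<alpha> u z * \<beta> z v \<noteq> 0" by (elim conv_nonzero)
    consider "z = u" | "z = v" | "u < z" "z < v" using z by (auto simp: less_le)
    thus "p \<in> jumps \<beta> x y \<union> jumps \<alpha> x y \<union> fst ` jumps \<alpha> x y \<times> snd ` jumps \<beta> x y"
    proof cases
      case 3
      hence "(u, z) \<in> jumps \<alpha> x y" "(z, v) \<in> jumps \<beta> x y"
        using uv z by (auto simp: jumps_def intro: order_trans less_imp_le)
      thus ?thesis using uv by force
    qed (use uv z in \<open>auto simp: jumps_def\<close>)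
  qed
  thus "finite (jumps (conv \<alpha> \<beta>) x y)"
    by (rule finite_subset) (simp add: finite_jumps assms)
qed

lemma conv_assoc:
  assumes a: "\<alpha> \<in> FI" and b: "\<beta> \<in> FI" and c: "\<gamma> \<in> FI"
  shows "conv (conv \<alpha> \<beta>) \<gamma> = conv \<alpha> (conv \<beta> \<gamma>)"
proof (intro ext)
  fix x y
  show "conv (conv \<alpha> \<beta>) \<gamma> x y = conv \<alpha> (conv \<beta> \<gamma>) x y"
  proof (cases "x \<le> y")
    case False thus ?thesis by (simp add: conv_0)
  next
    case xy: True
    text \<open>All sums can be taken over one common finite set of points of [x,y].\<close>
    define F where "F = support_pts \<alpha> x y \<union> support_pts \<gamma> x y"
    have fin: "finite F" using a c by (simp add: F_def finite_support_pts)
    have F_between: "z \<in> F \<Longrightarrow> x \<le> z \<and> z \<le> y" for z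
      using xy by (auto simp: F_def dest: support_pts_between)
    have left: "conv \<alpha> \<beta> x z = (\<Sum>w\<in>F. \<alpha> x w * \<beta> w z)" if "z \<in> F" for z
      using F_between[OF that]
      by (intro conv_sum[OF a b fin]) (auto simp: F_def intro: support_pts_left[OF a] order_trans)
    have right: "conv \<beta> \<gamma> w y = (\<Sum>z\<in>F. \<beta> w z * \<gamma> z y)" if "w \<in> F" for w
      using F_between[OF that]
      by (intro conv_sum[OF b c fin]) (auto simp: F_def intro: support_pts_right[OF c] order_trans)
    have "conv (conv \<alpha> \<beta>) \<gamma> x y = (\<Sum>z\<in>F. conv \<alpha> \<beta> x z * \<gamma> z y)"
      by (rule conv_sum[OF conv_FI[OF a b] c fin xy])
         (auto simp: F_def intro: support_pts_right[OF c])
    also have "\<dots> = (\<Sum>z\<in>F. (\<Sum>w\<in>F. \<alpha> x w * \<beta> w z) * \<gamma> z y)"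
      by (simp add: left)
    also have "\<dots> = (\<Sum>w\<in>F. \<alpha> x w * (\<Sum>z\<in>F. \<beta> w z * \<gamma> z y))"
      unfolding sum_distrib_left sum_distrib_right mult.assoc by (rule sum.swap)
    also have "\<dots> = (\<Sum>w\<in>F. \<alpha> x w * conv \<beta> \<gamma> w y)"
      by (simp add: right)
    also have "\<dots> = conv \<alpha> (conv \<beta> \<gamma>) x y"
      by (rule conv_sum[OF a conv_FI[OF b c] fin xy, symmetric])
         (auto simp: F_def intro: support_pts_left[OF a])
    finally show ?thesis .
  qed
qed

lemma one_FI: "one_inc \<in> FI"
  by (rule FI_I) (auto simp: one_inc_def jumps_def)

lemma zero_FI: "zero_inc \<in> FI"
  by (rule FI_I) (auto simp: zero_inc_def jumps_def)

lemma conv_one_left: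
  assumes "\<alpha> \<in> FI"
  shows "conv one_inc \<alpha> = \<alpha>"
proof (intro ext)
  fix x y
  show "conv one_inc \<alpha> x y = \<alpha> x y"
  proof (cases "x \<le> y")
    case True
    have "conv one_inc \<alpha> x y = (\<Sum>z\<in>{x}. one_inc x z * \<alpha> z y)"
      by (rule conv_sum[OF one_FI assms _ True]) (auto simp: one_inc_def split: if_splits)
    thus ?thesis by (simp add: one_inc_def)
  qed (simp add: conv_0 FI_0[OF assms])
qed

lemma conv_one_right:
  assumes "\<alpha> \<in> FI"
  shows "conv \<alpha> one_inc = \<alpha>"
proof (intro ext)
  fix x y
  show "conv \<alpha> one_inc x y = \<alpha> x y"
  proof (cases "x \<le> y")
    case True
    have "conv \<alpha> one_inc x y = (\<Sum>z\<in>{y}. \<alpha> x z * one_inc z y)"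
      by (rule conv_sum[OF assms one_FI _ True]) (auto simp: one_inc_def split: if_splits)
    thus ?thesis by (simp add: one_inc_def)
  qed (simp add: conv_0 FI_0[OF assms])
qed

lemma lincomb_FI:
  assumes "\<alpha> \<in> FI" "\<beta> \<in> FI"
  shows "(\<lambda>x y. r * \<alpha> x y + s * \<beta> x y) \<in> FI"
proof (rule FI_I)
  show "r * \<alpha> x y + s * \<beta> x y = 0" if "\<not> x \<le> y" for x y using that assms by (simp add: FI_0)
  fix x y
  have "jumps (\<lambda>x y. r * \<alpha> x y + s * \<beta> x y) x y \<subseteq> jumps \<alpha> x y \<union> jumps \<beta> x y"
    by (auto simp: jumps_def)
  thus "finite (jumps (\<lambda>x y. r * \<alpha> x y + s * \<beta> x y) x y)"
    by (rule finite_subset) (simp add: finite_jumps assms)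
qed

lemma plus_FI: "\<alpha> \<in> FI \<Longrightarrow> \<beta> \<in> FI \<Longrightarrow> (\<lambda>x y. \<alpha> x y + \<beta> x y) \<in> FI"
  using lincomb_FI[of \<alpha> \<beta> 1 1] by simp

lemma minus_FI: "\<alpha> \<in> FI \<Longrightarrow> \<beta> \<in> FI \<Longrightarrow> (\<lambda>x y. \<alpha> x y - \<beta> x y) \<in> FI"
  using lincomb_FI[of \<alpha> \<beta> 1 "-1"] by simp

lemma uminus_FI: "\<alpha> \<in> FI \<Longrightarrow> (\<lambda>x y. - \<alpha> x y) \<in> FI"
  using lincomb_FI[of \<alpha> \<alpha> "-1" 0] by simp

lemma conv_distrib_right:
  assumes "\<alpha> \<in> FI" "\<beta> \<in> FI" "\<gamma> \<in> FI"
  shows "conv (\<lambda>x y. \<alpha> x y + \<beta> x y) \<gamma> x y = conv \<alpha> \<gamma> x y + conv \<beta> \<gamma> x y"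
proof (cases "x \<le> y")
  case True
  let ?F = "support_pts \<gamma> x y"
  have "conv \<phi> \<gamma> x y = (\<Sum>z\<in>?F. \<phi> x z * \<gamma> z y)" if "\<phi> \<in> FI" for \<phi>
    by (rule conv_sum[OF that assms(3) finite_support_pts[OF assms(3)] True])
       (auto intro: support_pts_right[OF assms(3)])
  thus ?thesis using assms by (simp add: plus_FI sum.distrib distrib_right)
qed (simp add: conv_0)

lemma conv_distrib_left:
  assumes "\<alpha> \<in> FI" "\<beta> \<in> FI" "\<gamma> \<in> FI"
  shows "conv \<gamma> (\<lambda>x y. \<alpha> x y + \<beta> x y) x y = conv \<gamma> \<alpha> x y + conv \<gamma> \<beta> x y"
proof (cases "x \<le> y")
  case True
  let ?F = "support_pts \<gamma> x y"
  have "conv \<gamma> \<phi> x y = (\<Sum>z\<in>?F. \<gamma> x z * \<phi> z y)" if "\<phi> \<in> FI" for \<phi>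
    by (rule conv_sum[OF assms(3) that finite_support_pts[OF assms(3)] True])
       (auto intro: support_pts_left[OF assms(3)])
  thus ?thesis using assms by (simp add: plus_FI sum.distrib distrib_left)
qed (simp add: conv_0)

section \<open>The ring FI(P)\<close>

typedef (overloaded) ('a, 'k) fi = "FI :: ('a::order, 'k::field) inc set"
  morphisms R A
  using zero_FI by blast

lemma R_FI: "R a \<in> FI"
  using R by blast

lemma fi_eq_iff: "a = b \<longleftrightarrow> R a = R b"
  by (simp add: R_inject)

instantiation fi :: (order, field) ring_1
begin

definition "0 = A zero_inc"
definition "1 = A one_inc"
definition "a + b = A (\<lambda>x y. R a x y + R b x y)"
definition "a - b = A (\<lambda>x y. R a x y - R b x y)"
definition "- a = A (\<lambda>x y. - R a x y)"
definition "a * b = A (conv (R a) (R b))"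

lemma R_zero [simp]: "R 0 = zero_inc"
  by (simp add: zero_fi_def A_inverse zero_FI)
lemma R_one [simp]: "R 1 = one_inc"
  by (simp add: one_fi_def A_inverse one_FI)
lemma R_plus [simp]: "R (a + b) = (\<lambda>x y. R a x y + R b x y)"
  by (simp add: plus_fi_def A_inverse plus_FI R_FI)
lemma R_minus [simp]: "R (a - b) = (\<lambda>x y. R a x y - R b x y)"
  by (simp add: minus_fi_def A_inverse minus_FI R_FI)
lemma R_uminus [simp]: "R (- a) = (\<lambda>x y. - R a x y)"
  by (simp add: uminus_fi_def A_inverse uminus_FI R_FI)
lemma R_times [simp]: "R (a * b) = conv (R a) (R b)"
  by (simp add: times_fi_def A_inverse conv_FI R_FI)

instance
proof
  fix a b c :: "('a, 'b) fi"
  show "a * b * c = a * (b * c)" by (simp add: fi_eq_iff conv_assoc R_FI)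
  show "1 * a = a" by (simp add: fi_eq_iff conv_one_left R_FI)
  show "a * 1 = a" by (simp add: fi_eq_iff conv_one_right R_FI)
  show "a + b + c = a + (b + c)" by (simp add: fi_eq_iff add.assoc)
  show "a + b = b + a" by (simp add: fi_eq_iff add.commute)
  show "0 + a = a" by (simp add: fi_eq_iff zero_inc_def)
  show "- a + a = 0" by (simp add: fi_eq_iff zero_inc_def fun_eq_iff)
  show "a - b = a + - b" by (simp add: fi_eq_iff)
  show "(a + b) * c = a * c + b * c" by (simp add: fi_eq_iff conv_distrib_right R_FI fun_eq_iff)
  show "a * (b + c) = a * b + a * c" by (simp add: fi_eq_iff conv_distrib_left R_FI fun_eq_iff)
  show "0 \<noteq> (1 :: ('a, 'b) fi)" by (simp add: fi_eq_iff fun_eq_iff zero_inc_def one_inc_def)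
qed

end

lemma R_A: "\<alpha> \<in> FI \<Longrightarrow> R (A \<alpha>) = \<alpha>"
  by (rule A_inverse)

lemma R_times_same: "R (a * b) x x = R a x x * R b x x"
  by (simp add: conv_same R_FI)

lemma R_sum: "R (\<Sum>i<(m::nat). f i) x y = (\<Sum>i<m. R (f i) x y)"
  by (induct m) (simp_all add: zero_inc_def)

section \<open>Primitive idempotents in an arbitrary ring\<close>

definition primitive_elem :: "'a::ring_1 \<Rightarrow> bool" where
  "primitive_elem e \<longleftrightarrow> e * e = e \<and> e \<noteq> 0 \<and>
     (\<forall>f. f * f = f \<and> f * e = f \<and> e * f = f \<longrightarrow> f = 0 \<or> f = e)"

lemma primitive_elem_conj:
  fixes b c e :: "'a::ring_1"
  assumes bc: "b * c = 1" and cb: "c * b = 1" and p: "primitive_elem e"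
  shows "primitive_elem (c * e * b)"
  unfolding primitive_elem_def
proof (intro conjI allI impI)
  have ee: "e * e = e" and e0: "e \<noteq> 0" using p by (auto simp: primitive_elem_def)
  show "c * e * b * (c * e * b) = c * e * b"
    by (metis bc ee mult.assoc mult_1_left)
  show "c * e * b \<noteq> 0"
  proof
    assume "c * e * b = 0"
    hence "b * (c * e * b) * c = 0" by simp
    hence "e = 0" by (metis bc mult.assoc mult_1_left mult_1_right)
    thus False using e0 by simp
  qed
  fix f assume f: "f * f = f \<and> f * (c * e * b) = f \<and> c * e * b * f = f"
  text \<open>Conjugate f back to an idempotent below e.\<close>
  define g where "g = b * f * c"
  have "g * g = g" using f unfolding g_def by (metis bc mult.assoc mult_1_left)
  moreover have "g * e = g"
  proof -
    have "g * e = b * (f * (c * e * b)) * c"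
      unfolding g_def by (metis bc cb mult.assoc mult_1_left mult_1_right)
    thus ?thesis using f g_def by simp
  qed
  moreover have "e * g = g"
  proof -
    have "e * g = b * ((c * e * b) * f) * c"
      unfolding g_def by (metis bc cb mult.assoc mult_1_left mult_1_right)
    thus ?thesis using f g_def by simp
  qed
  ultimately have "g = 0 \<or> g = e" using p by (auto simp: primitive_elem_def)
  moreover have "f = c * g * b" unfolding g_def by (metis cb mult.assoc mult_1_left mult_1_right)
  ultimately show "f = 0 \<or> f = c * e * b" by auto
qed

lemma primitive_elem_conj_iff:
  fixes b c e :: "'a::ring_1"
  assumes "b * c = 1" "c * b = 1"
  shows "primitive_elem (c * e * b) \<longleftrightarrow> primitive_elem e"
proof
  assume "primitive_elem (c * e * b)"
  hence "primitive_elem (b * (c * e * b) * c)" by (rule primitive_elem_conj[OF assms(2,1)])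
  thus "primitive_elem e" by (simp add: mult.assoc assms) (simp add: assms flip: mult.assoc)
qed (rule primitive_elem_conj[OF assms])

lemma idempotent_intertwiner:
  fixes a e :: "'a::ring_1"
  assumes aa: "a * a = a" and ee: "e * e = e"
  shows "(e * a + (1 - e) * (1 - a)) * a = e * (e * a + (1 - e) * (1 - a))"
proof -
  have "(e * a + (1 - e) * (1 - a)) * a = e * (a * a) + (1 - e) * (a - a * a)"
    by (simp add: algebra_simps)
  also have "\<dots> = e * a" using aa by simp
  also have "\<dots> = (e * e) * a + (e - e * e) * (1 - a)" using ee by simp
  also have "\<dots> = e * (e * a + (1 - e) * (1 - a))" by (simp add: algebra_simps)
  finally show ?thesis .
qed

lemma geometric_sum:
  fixes x :: "'a::ring_1"
  shows "(1 - x) * (\<Sum>i<n. x ^ i) = 1 - x ^ n" and "(\<Sum>i<n. x ^ i) * (1 - x) = 1 - x ^ n"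
proof -
  have "(1 - x) * (\<Sum>i<n. x ^ i) = 1 - x ^ n" for n
  proof (induct n)
    case (Suc n)
    have "(1 - x) * (\<Sum>i<Suc n. x ^ i) = (1 - x) * (\<Sum>i<n. x ^ i) + (x ^ n - x * x ^ n)"
      by (simp add: algebra_simps)
    thus ?case using Suc by simp
  qed simp
  moreover have "(\<Sum>i<n. x ^ i) * (1 - x) = (1 - x) * (\<Sum>i<n. x ^ i)" for n
  proof -
    have "x * (\<Sum>i<n. x ^ i) = (\<Sum>i<n. x ^ i) * x"
      by (simp add: sum_distrib_left sum_distrib_right power_commutes)
    thus ?thesis by (simp add: algebra_simps)
  qed
  ultimately show "(1 - x) * (\<Sum>i<n. x ^ i) = 1 - x ^ n" "(\<Sum>i<n. x ^ i) * (1 - x) = 1 - x ^ n"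
    by simp_all
qed

section \<open>Series with unit diagonal are invertible\<close>

text \<open>Let nu vanish on the diagonal.  A nonzero entry (x,y) of nu^n comes from a chain
  x = z0 < z1 < ... < zn = y of nonzero entries of nu, i.e. from n distinct jumps of nu
  in [x,y]; so nu^n vanishes at (x,y) as soon as n exceeds their number.\<close>

definition depth :: "('a::order, 'k::field) fi \<Rightarrow> 'a \<Rightarrow> 'a \<Rightarrow> nat" where
  "depth \<nu> x y = Suc (card (jumps (R \<nu>) x y))"

lemma depth_mono: "x \<le> u \<Longrightarrow> v \<le> y \<Longrightarrow> depth \<nu> u v \<le> depth \<nu> x y"
  unfolding depth_def by (simp add: card_mono finite_jumps R_FI jumps_mono)

lemma power_nonzero_bound:
  fixes \<nu> :: "('a::order, 'k::field) fi"
  assumes diag0: "\<And>x. R \<nu> x x = 0" and nz: "R (\<nu> ^ n) x y \<noteq> 0"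
  shows "n \<le> card (jumps (R \<nu>) x y)"
  using nz
proof (induct n arbitrary: x)
  case (Suc n)
  hence "conv (R \<nu>) (R (\<nu> ^ n)) x y \<noteq> 0" by simp
  then obtain z where z: "x \<le> z" "z \<le> y" "R \<nu> x z * R (\<nu> ^ n) z y \<noteq> 0"
    by (elim conv_nonzero)
  have xz: "x < z" using z diag0 by (auto simp: less_le)
  have "jumps (R \<nu>) z y \<subset> jumps (R \<nu>) x y"
  proof
    show "jumps (R \<nu>) z y \<subseteq> jumps (R \<nu>) x y" using z by (intro jumps_mono) simp_all
    have "(x, z) \<in> jumps (R \<nu>) x y - jumps (R \<nu>) z y" using z xz by (auto simp: jumps_def)
    thus "jumps (R \<nu>) z y \<noteq> jumps (R \<nu>) x y" by blast
  qed
  hence "card (jumps (R \<nu>) z y) < card (jumps (R \<nu>) x y)"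
    by (rule psubset_card_mono[OF finite_jumps[OF R_FI]])
  moreover have "n \<le> card (jumps (R \<nu>) z y)" using Suc z by simp
  ultimately show ?case by simp
qed simp

lemma power_vanishes:
  fixes \<nu> :: "('a::order, 'k::field) fi"
  assumes "\<And>x. R \<nu> x x = 0" "depth \<nu> x y \<le> n"
  shows "R (\<nu> ^ n) x y = 0"
  using power_nonzero_bound[OF assms(1), of n x y] assms(2) by (auto simp: depth_def)

text \<open>The inverse of 1 - nu: on the entry (x,y) the geometric series of nu is truncated at
  depth nu x y; on a subinterval of [x,y] this agrees with the truncation at any larger
  depth, in particular at depth nu x y.\<close>

definition geo_inverse :: "('a::order, 'k::field) fi \<Rightarrow> ('a, 'k) inc" where
  "geo_inverse \<nu> x y = R (\<Sum>i<depth \<nu> x y. \<nu> ^ i) x y"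

lemma geo_inverse_local:
  fixes \<nu> :: "('a::order, 'k::field) fi"
  assumes diag0: "\<And>x. R \<nu> x x = 0" and "x \<le> u" "v \<le> y"
  shows "geo_inverse \<nu> u v = R (\<Sum>i<depth \<nu> x y. \<nu> ^ i) u v"
proof -
  have "depth \<nu> u v \<le> depth \<nu> x y" using assms(2,3) by (rule depth_mono)
  hence "(\<Sum>i<depth \<nu> x y. R (\<nu> ^ i) u v) = (\<Sum>i<depth \<nu> u v. R (\<nu> ^ i) u v)"
    by (intro sum.mono_neutral_right) (auto intro: power_vanishes[OF diag0])
  thus ?thesis by (simp add: geo_inverse_def R_sum)
qed

lemma geo_inverse_FI:
  fixes \<nu> :: "('a::order, 'k::field) fi"
  assumes diag0: "\<And>x. R \<nu> x x = 0"
  shows "geo_inverse \<nu> \<in> FI"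
proof (rule FI_I)
  show "geo_inverse \<nu> x y = 0" if "\<not> x \<le> y" for x y
    unfolding geo_inverse_def by (rule FI_0[OF R_FI that])
  fix x y
  have "jumps (geo_inverse \<nu>) x y = jumps (R (\<Sum>i<depth \<nu> x y. \<nu> ^ i)) x y"
    unfolding jumps_def using geo_inverse_local[OF diag0] by (auto intro: less_imp_le)
  thus "finite (jumps (geo_inverse \<nu>) x y)" by (simp add: finite_jumps R_FI)
qed

text \<open>Locally the product with 1 - nu telescopes to 1 - nu^(depth nu x y), whose entry
  (x,y) is that of the identity.\<close>

lemma geo_inverse_inverts:
  fixes \<nu> :: "('a::order, 'k::field) fi"
  assumes diag0: "\<And>x. R \<nu> x x = 0"
  shows "conv (R (1 - \<nu>)) (geo_inverse \<nu>) = one_inc"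
    and "conv (geo_inverse \<nu>) (R (1 - \<nu>)) = one_inc"
proof -
  let ?s = "\<lambda>x y. \<Sum>i<depth \<nu> x y. \<nu> ^ i"
  have one: "R (1 - \<nu> ^ depth \<nu> x y) x y = one_inc x y" for x y
    by (simp add: power_vanishes[OF diag0])
  show "conv (R (1 - \<nu>)) (geo_inverse \<nu>) = one_inc"
  proof (intro ext)
    fix x y
    show "conv (R (1 - \<nu>)) (geo_inverse \<nu>) x y = one_inc x y"
    proof (cases "x \<le> y")
      case True
      have "conv (R (1 - \<nu>)) (geo_inverse \<nu>) x y = R ((1 - \<nu>) * ?s x y) x y"
        unfolding R_times by (rule conv_local_right) (simp add: geo_inverse_local[OF diag0])
      thus ?thesis by (simp only: geometric_sum one)
    qed (simp add: conv_0 one_inc_def)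
  qed
  show "conv (geo_inverse \<nu>) (R (1 - \<nu>)) = one_inc"
  proof (intro ext)
    fix x y
    show "conv (geo_inverse \<nu>) (R (1 - \<nu>)) x y = one_inc x y"
    proof (cases "x \<le> y")
      case True
      have "conv (geo_inverse \<nu>) (R (1 - \<nu>)) x y = R (?s x y * (1 - \<nu>)) x y"
        unfolding R_times by (rule conv_local_left) (simp add: geo_inverse_local[OF diag0])
      thus ?thesis by (simp only: geometric_sum one)
    qed (simp add: conv_0 one_inc_def)
  qed
qed

lemma unit_diagonal_invertible:
  fixes b :: "('a::order, 'k::field) fi"
  assumes "\<And>x. R b x x = 1"
  obtains c where "b * c = 1" "c * b = 1"
proof -
  define \<nu> where "\<nu> = 1 - b"
  have diag0: "R \<nu> x x = 0" for x by (simp add: \<nu>_def one_inc_def assms)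
  have b: "b = 1 - \<nu>" by (simp add: \<nu>_def)
  have "b * A (geo_inverse \<nu>) = 1" "A (geo_inverse \<nu>) * b = 1"
    using geo_inverse_inverts[OF diag0]
    by (simp_all add: fi_eq_iff R_A geo_inverse_FI[OF diag0] b)
  thus ?thesis by (rule that)
qed

lemma conv_diag_left:
  assumes "\<alpha> \<in> FI" "\<beta> \<in> FI" "diagonal \<alpha>"
  shows "conv \<alpha> \<beta> x y = \<alpha> x x * \<beta> x y"
proof (cases "x \<le> y")
  case True
  have "conv \<alpha> \<beta> x y = (\<Sum>z\<in>{x}. \<alpha> x z * \<beta> z y)"
    by (rule conv_sum[OF assms(1,2) _ True]) (simp, metis assms(3) diagonal_def mult_zero_left singletonI)
  thus ?thesis by simp
qed (simp add: conv_0 FI_0[OF assms(2)])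

lemma conv_diag_right:
  assumes "\<alpha> \<in> FI" "\<beta> \<in> FI" "diagonal \<beta>"
  shows "conv \<alpha> \<beta> x y = \<alpha> x y * \<beta> y y"
proof (cases "x \<le> y")
  case True
  have "conv \<alpha> \<beta> x y = (\<Sum>z\<in>{y}. \<alpha> x z * \<beta> z y)"
    by (rule conv_sum[OF assms(1,2) _ True]) (simp, metis assms(3) diagonal_def mult_zero_right singletonI)
  thus ?thesis by simp
qed (simp add: conv_0 FI_0[OF assms(1)])

lemma diagonal_FI:
  assumes "diagonal \<alpha>"
  shows "\<alpha> \<in> FI"
proof (rule FI_I)
  show "\<alpha> x y = 0" if "\<not> x \<le> y" for x y using assms that by (auto simp: diagonal_def)
  fix x y
  have "jumps \<alpha> x y = {}" using assms by (auto simp: diagonal_def jumps_def)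
  thus "finite (jumps \<alpha> x y)" by simp
qed

lemma R_A_diagonal: "diagonal \<delta> \<Longrightarrow> R (A \<delta>) = \<delta>"
  by (rule R_A[OF diagonal_FI])

lemma idempotent_diag_entry:
  assumes "idempotent \<alpha>"
  shows "\<alpha> x x = 0 \<or> \<alpha> x x = 1"
proof -
  have "\<alpha> x x * \<alpha> x x = \<alpha> x x"
    using assms conv_same[of \<alpha> \<alpha> x] by (simp add: idempotent_def)
  thus ?thesis by (metis mult_cancel_right2 mult_zero_left)
qed

lemma delta_diagonal: "diagonal (delta x)"
  by (simp add: diagonal_def delta_def)

lemma delta_primitive: "primitive (delta x :: ('a::order, 'k::field) inc)"
  unfolding primitive_def
proof (intro conjI allI impI)
  have dF: "(delta x :: ('a, 'k) inc) \<in> FI" by (rule diagonal_FI[OF delta_diagonal])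
  have "conv (delta x) (delta x) = (delta x :: ('a, 'k) inc)"
    by (intro ext) (simp add: conv_diag_left dF delta_diagonal, simp add: delta_def)
  thus "idempotent (delta x :: ('a, 'k) inc)" by (simp add: idempotent_def dF)
  show "delta x \<noteq> (zero_inc :: ('a, 'k) inc)"
    by (auto simp: fun_eq_iff delta_def zero_inc_def)
  fix \<epsilon> :: "('a, 'k) inc"
  assume e: "idempotent \<epsilon> \<and> conv \<epsilon> (delta x) = \<epsilon> \<and> conv (delta x) \<epsilon> = \<epsilon>"
  hence eF: "\<epsilon> \<in> FI" by (simp add: idempotent_def)
  text \<open>Multiplying by delta x on both sides kills every entry except (x,x).\<close>
  have E: "\<epsilon> u v = (if u = x \<and> v = x then \<epsilon> x x else 0)" for u v
  proof -
    have "\<epsilon> u v = delta x u u * \<epsilon> u v"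
      using e conv_diag_left[OF dF eF delta_diagonal, of u v] by simp
    moreover have "\<epsilon> u v = \<epsilon> u v * delta x v v"
      using e conv_diag_right[OF eF dF delta_diagonal, of u v] by simp
    ultimately show ?thesis by (auto simp: delta_def)
  qed
  have "\<epsilon> x x = 0 \<or> \<epsilon> x x = 1" using e idempotent_diag_entry by blast
  thus "\<epsilon> = zero_inc \<or> \<epsilon> = delta x"
  proof
    assume "\<epsilon> x x = 0"
    thus ?thesis by (auto simp: fun_eq_iff zero_inc_def intro!: disjI1 E[THEN trans])
  next
    assume "\<epsilon> x x = 1"
    thus ?thesis by (auto simp: fun_eq_iff delta_def intro!: disjI2 E[THEN trans])
  qed
qed

lemma diagonal_primitive_delta:
  assumes d: "diagonal \<alpha>" and p: "primitive \<alpha>"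
  obtains x where "\<alpha> = delta x"
proof -
  have aF: "\<alpha> \<in> FI" and idem: "idempotent \<alpha>" and nz: "\<alpha> \<noteq> zero_inc"
    using p by (auto simp: primitive_def idempotent_def)
  obtain u v where "\<alpha> u v \<noteq> 0" using nz by (auto simp: fun_eq_iff zero_inc_def)
  moreover from this have "u = v" using d by (auto simp: diagonal_def)
  ultimately obtain x where "\<alpha> x x \<noteq> 0" by blast
  hence ax: "\<alpha> x x = 1" using idempotent_diag_entry[OF idem] by blast
  text \<open>delta x lies below alpha, hence equals it by primitivity.\<close>
  have dF: "(delta x :: ('a, 'b) inc) \<in> FI" by (rule diagonal_FI[OF delta_diagonal])
  have "conv (delta x) \<alpha> = delta x" "conv \<alpha> (delta x) = delta x"
    using ax d
    by (auto simp: fun_eq_iff conv_diag_left[OF dF aF delta_diagonal]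
                   conv_diag_right[OF aF dF delta_diagonal] delta_def diagonal_def)
  moreover have "idempotent (delta x)" "delta x \<noteq> zero_inc"
    using delta_primitive[of x] by (auto simp: primitive_def)
  ultimately have "delta x = \<alpha>" using p unfolding primitive_def by blast
  thus ?thesis by (rule that[OF sym])
qed

definition diag_part :: "('a::order, 'k::field) inc \<Rightarrow> ('a, 'k) inc" where
  "diag_part \<alpha> x y = (if x = y then \<alpha> x x else 0)"

lemma diagonal_diag_part: "diagonal (diag_part \<alpha>)"
  by (simp add: diagonal_def diag_part_def)

lemma diag_part_idempotent:
  assumes "idempotent \<alpha>"
  shows "idempotent (diag_part \<alpha>)"
proof -
  have dF: "diag_part \<alpha> \<in> FI" by (rule diagonal_FI[OF diagonal_diag_part])
  have "conv (diag_part \<alpha>) (diag_part \<alpha>) = diag_part \<alpha>"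
    using idempotent_diag_entry[OF assms]
    by (auto simp: fun_eq_iff conv_diag_left[OF dF dF diagonal_diag_part] diag_part_def)
  thus ?thesis by (simp add: idempotent_def dF)
qed

lemma idempotent_R: "idempotent (R a) \<longleftrightarrow> a * a = a"
  by (simp add: idempotent_def R_FI fi_eq_iff)

lemma primitive_R: "primitive (R a) \<longleftrightarrow> primitive_elem a"
proof
  assume p: "primitive (R a)"
  show "primitive_elem a" unfolding primitive_elem_def
  proof (intro conjI allI impI)
    show "a * a = a" "a \<noteq> 0" using p by (auto simp: primitive_def idempotent_R fi_eq_iff)
    fix f assume "f * f = f \<and> f * a = f \<and> a * f = f"
    hence "idempotent (R f) \<and> conv (R f) (R a) = R f \<and> conv (R a) (R f) = R f"
      by (simp add: idempotent_R flip: R_times)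
    hence "R f = zero_inc \<or> R f = R a" using p unfolding primitive_def by blast
    thus "f = 0 \<or> f = a" by (simp add: fi_eq_iff)
  qed
next
  assume p: "primitive_elem a"
  show "primitive (R a)" unfolding primitive_def
  proof (intro conjI allI impI)
    show "idempotent (R a)" "R a \<noteq> zero_inc" using p by (auto simp: primitive_elem_def idempotent_R fi_eq_iff)
    fix \<epsilon> assume e: "idempotent \<epsilon> \<and> conv \<epsilon> (R a) = \<epsilon> \<and> conv (R a) \<epsilon> = \<epsilon>"
    hence R\<epsilon>: "R (A \<epsilon>) = \<epsilon>" by (simp add: idempotent_def R_A)
    have "A \<epsilon> * A \<epsilon> = A \<epsilon> \<and> A \<epsilon> * a = A \<epsilon> \<and> a * A \<epsilon> = A \<epsilon>"
      using e by (simp add: fi_eq_iff R\<epsilon> idempotent_def)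
    hence "A \<epsilon> = 0 \<or> A \<epsilon> = a" using p by (simp add: primitive_elem_def)
    thus "\<epsilon> = zero_inc \<or> \<epsilon> = R a" using R\<epsilon> by auto
  qed
qed

lemma inv_FI_eq:
  assumes "\<beta> \<in> FI" "\<gamma> \<in> FI" "conv \<beta> \<gamma> = one_inc" "conv \<gamma> \<beta> = one_inc"
  shows "inv_FI \<beta> = \<gamma>"
  unfolding inv_FI_def
proof (rule the_equality)
  show "\<gamma> \<in> FI \<and> conv \<beta> \<gamma> = one_inc \<and> conv \<gamma> \<beta> = one_inc" using assms by simp
  fix g assume g: "g \<in> FI \<and> conv \<beta> g = one_inc \<and> conv g \<beta> = one_inc"
  have "conv (conv g \<beta>) \<gamma> = conv g (conv \<beta> \<gamma>)" using g assms by (intro conv_assoc) auto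
  thus "g = \<gamma>" using g assms by (simp add: conv_one_left conv_one_right)
qed

lemma unit_invertible_FI:
  assumes "b * c = 1" "c * b = 1"
  shows "invertible_FI (R b)" and "inv_FI (R b) = R c"
  using assms by (auto simp: invertible_FI_def R_FI fi_eq_iff intro!: inv_FI_eq)

lemma invertible_FI_unit:
  assumes "invertible_FI \<beta>"
  obtains b c where "R b = \<beta>" "R c = inv_FI \<beta>" "b * c = 1" "c * b = 1"
proof -
  obtain \<gamma> where \<beta>: "\<beta> \<in> FI" and \<gamma>: "\<gamma> \<in> FI" "conv \<beta> \<gamma> = one_inc" "conv \<gamma> \<beta> = one_inc"
    using assms by (auto simp: invertible_FI_def)
  have "A \<beta> * A \<gamma> = 1" "A \<gamma> * A \<beta> = 1" using \<beta> \<gamma> by (simp_all add: fi_eq_iff R_A)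
  moreover have "R (A \<gamma>) = inv_FI \<beta>" using inv_FI_eq[OF \<beta> \<gamma>] \<gamma> by (simp add: R_A)
  ultimately show ?thesis using that R_A[OF \<beta>] by blast
qed

section \<open>Every idempotent is conjugate to its diagonal part\<close>

lemma idempotent_conj_diag_part:
  fixes a :: "('a::order, 'k::field) fi"
  assumes aa: "a * a = a"
  obtains b c where "b * c = 1" "c * b = 1" "a = c * A (diag_part (R a)) * b"
proof -
  define e where "e = A (diag_part (R a))"
  have Re: "R e = diag_part (R a)"
    by (simp add: e_def R_A_diagonal[OF diagonal_diag_part])
  have ee: "e * e = e"
    using diag_part_idempotent[of "R a"] aa by (simp flip: idempotent_R add: Re)
  define b where "b = e * a + (1 - e) * (1 - a)"
  text \<open>Since the diagonal entries of a are 0 or 1, b has unit diagonal.\<close>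
  have "R b x x = 1" for x
    using idempotent_diag_entry[of "R a" x] aa idempotent_R[of a]
    by (auto simp del: R_times simp: b_def R_times_same Re diag_part_def one_inc_def)
  then obtain c where bc: "b * c = 1" and cb: "c * b = 1" by (rule unit_diagonal_invertible)
  have "a = c * (b * a)" by (simp flip: mult.assoc add: cb)
  also have "b * a = e * b" unfolding b_def by (rule idempotent_intertwiner[OF aa ee])
  finally have "a = c * e * b" by (simp add: mult.assoc)
  thus ?thesis using bc cb that by (simp add: e_def)
qed

text \<open>A primitive idempotent is conjugate to its diagonal part, which is therefore a
  primitive diagonal idempotent, i.e. some delta x.\<close>

lemma primitive_conj_delta:
  fixes \<alpha> :: "('a::order, 'k::field) inc"
  assumes "primitive \<alpha>"
  shows "\<exists>x \<beta>. invertible_FI \<beta> \<and> \<alpha> = conv (conv (inv_FI \<beta>) (delta x)) \<beta>"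
proof -
  define a where "a = A \<alpha>"
  have Ra: "R a = \<alpha>" and aa: "a * a = a"
    using assms by (simp_all add: a_def R_A primitive_def idempotent_def fi_eq_iff)
  obtain b c where bc: "b * c = 1" "c * b = 1" and a: "a = c * A (diag_part \<alpha>) * b"
    by (rule idempotent_conj_diag_part[OF aa, unfolded Ra])
  have "primitive_elem a" using assms primitive_R[of a] by (simp add: Ra)
  hence "primitive_elem (A (diag_part \<alpha>))" using primitive_elem_conj_iff[OF bc] a by simp
  hence "primitive (diag_part \<alpha>)"
    using primitive_R[of "A (diag_part \<alpha>)"] by (simp add: R_A_diagonal[OF diagonal_diag_part])
  then obtain x where "diag_part \<alpha> = delta x"
    by (rule diagonal_primitive_delta[OF diagonal_diag_part])
  moreover have "R (A (delta x)) = (delta x :: ('a, 'k) inc)" by (rule R_A_diagonal[OF delta_diagonal])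
  ultimately have "\<alpha> = conv (conv (inv_FI (R b)) (delta x)) (R b)"
    using Ra a unit_invertible_FI[OF bc] by simp
  thus ?thesis using unit_invertible_FI[OF bc] by blast
qed

lemma conj_delta_primitive:
  fixes \<beta> :: "('a::order, 'k::field) inc"
  assumes "invertible_FI \<beta>"
  shows "primitive (conv (conv (inv_FI \<beta>) (delta x)) \<beta>)"
proof -
  obtain b c where b: "R b = \<beta>" and c: "R c = inv_FI \<beta>" and bc: "b * c = 1" "c * b = 1"
    by (rule invertible_FI_unit[OF assms])
  have "R (A (delta x)) = (delta x :: ('a, 'k) inc)" by (rule R_A_diagonal[OF delta_diagonal])
  hence "primitive_elem (A (delta x) :: ('a, 'k) fi)" by (metis delta_primitive primitive_R)
  hence "primitive (R (c * A (delta x) * b))"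
    by (simp only: primitive_R primitive_elem_conj_iff[OF bc])
  thus ?thesis by (simp add: b c R_A_diagonal[OF delta_diagonal])
qed

theorem lemma1:
  fixes \<alpha> :: "('a::order, 'k::field) inc"
  assumes "idempotent \<alpha>"
  shows "(primitive \<alpha> \<longleftrightarrow>
           (\<exists>x \<beta>. invertible_FI \<beta> \<and> \<alpha> = conv (conv (inv_FI \<beta>) (delta x)) \<beta>))
         \<and> (diagonal \<alpha> \<longrightarrow> (primitive \<alpha> \<longleftrightarrow> (\<exists>x. \<alpha> = delta x)))"
  using primitive_conj_delta conj_delta_primitive diagonal_primitive_delta delta_primitive
  by blast

end
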